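(* Consider the program \[\Pi(\theta)=\max_{P}\int_0^\infty P(y)\,dy\quad\text{s.t.}\quad \lambda\int_0^\infty w_-(P(y))\,dy\le\theta,\] over functions $P:[0,\infty)\to[0,1]$ that are decreasing and right continuous. Its maximum value is $\mu^*\theta/\lambda$, and the unique optimal $P^*$ is \[P^*(y)=\begin{cases}p^* & \text{if } y<\frac{\mu^*\theta}{p^*\lambda},\\ 0 & \text{if } y\ge \frac{\mu^*\theta}{p^*\lambda}.\end{cases}\]
   Context: $\theta>0$, $\lambda>0$ are constants. $w_-:[0,1]\to[0,1]$ is strictly increasing, thrice differentiable, with $w_-(0)=0$, $w_-(1)=1$, $w_-'(0)>1$, $w_-'(1)>1$, $w_-'''>0$. $\mu^*=\max_{p\in(0,1]}p/w_-(p)$, and $p^*\in(0,1)$ is the unique point with $\mu^*w_-(p^* )=p^*$. ($P(y)$ is interpreted as the tail $P(T>y)$ of a nonnegative random price $T$.) *)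

theory Defs
  imports "HOL-Analysis.Analysis"
begin

definition admissible :: "(real \<Rightarrow> real) \<Rightarrow> bool" where
  "admissible P \<longleftrightarrow>
     (\<forall>y\<ge>0. 0 \<le> P y \<and> P y \<le> 1) \<and>
     (\<forall>x y. 0 \<le> x \<longrightarrow> x \<le> y \<longrightarrow> P y \<le> P x) \<and>
     (\<forall>y\<ge>0. continuous (at_right y) P)"

definition int0 :: "(real \<Rightarrow> real) \<Rightarrow> ennreal" where
  "int0 f = (\<integral>\<^sup>+ y\<in>{0..}. ennreal (f y) \<partial>lborel)"

definition mu_star :: "(real \<Rightarrow> real) \<Rightarrow> real" where
  "mu_star w = (SUP p\<in>{0<..1}. p / w p)"

end

theory Submission
  imports Defs
begin

(* Every p in [0,1] satisfies p <= mu* w(p), mu* being the supremum of p / w(p). Integrating this along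
   an admissible tail P gives  int P + int (mu* w(P) - P) = mu* int w(P) <= mu* theta / lambda,  which is
   the bound. For an optimal P the nonnegative gap mu* w(P) - P must vanish almost everywhere, so P takes
   only the fixed points 0 and p* of mu* w almost everywhere, hence everywhere by right continuity; a
   decreasing tail with values in {0, p*} and integral mu* theta / lambda is then the step function P*. *)

lemma int0_restrict_space: "int0 f = (\<integral>\<^sup>+y. ennreal (f y) \<partial>restrict_space lborel {0..})"
  by (simp add: int0_def nn_integral_restrict_space)

lemma int0_mono:
  assumes "\<And>y. 0 \<le> y \<Longrightarrow> f y \<le> g y"
  shows "int0 f \<le> int0 g"
  unfolding int0_def using assms by (intro nn_integral_mono) (auto simp: indicator_def ennreal_leI)

lemma int0_step:
  assumes "0 \<le> p" "0 \<le> c"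
  shows "int0 (\<lambda>y. if y < c then p else 0) = ennreal (p * c)"
proof -
  have "int0 (\<lambda>y. if y < c then p else 0) = (\<integral>\<^sup>+y. ennreal p * indicator {0..<c} y \<partial>lborel)"
    unfolding int0_def by (intro nn_integral_cong) (auto simp: indicator_def)
  also have "\<dots> = ennreal (p * c)"
    using assms by (simp add: nn_integral_cmult_indicator ennreal_mult)
  finally show ?thesis .
qed

lemma int0_le_of_vanishing:
  assumes "antimono_on {0..} P" and le: "\<And>z. 0 \<le> z \<Longrightarrow> P z \<le> p"
    and "P y = 0" "0 \<le> y" "0 \<le> p"
  shows "int0 P \<le> ennreal (p * y)"
proof -
  have "P z \<le> (if z < y then p else 0)" if "0 \<le> z" for z
  proof (cases "z < y")
    case False
    then have "P z \<le> P y"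
      using assms(1) that \<open>0 \<le> y\<close> by (auto simp: monotone_on_def)
    with False \<open>P y = 0\<close> show ?thesis by simp
  qed (use le[OF that] in auto)
  then have "int0 P \<le> int0 (\<lambda>z. if z < y then p else 0)"
    by (rule int0_mono)
  also have "\<dots> = ennreal (p * y)"
    using assms(5,4) by (rule int0_step)
  finally show ?thesis .
qed

lemma int0_ge_of_level:
  assumes "antimono_on {0..} P" and nonneg: "\<And>z. 0 \<le> z \<Longrightarrow> 0 \<le> P z"
    and "p \<le> P d" "0 \<le> d" "0 \<le> p"
  shows "ennreal (p * d) \<le> int0 P"
proof -
  have "(if z < d then p else 0) \<le> P z" if "0 \<le> z" for z
  proof (cases "z < d")
    case True
    then have "P d \<le> P z"
      using assms(1) that \<open>0 \<le> d\<close> by (auto simp: monotone_on_def)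
    with True \<open>p \<le> P d\<close> show ?thesis by simp
  qed (use nonneg[OF that] in auto)
  then have "int0 (\<lambda>z. if z < d then p else 0) \<le> int0 P"
    by (rule int0_mono)
  then show ?thesis
    using int0_step[OF assms(5,4)] by simp
qed

lemma antimono_on_borel_measurable:
  fixes f :: "real \<Rightarrow> real"
  assumes "antimono_on A f"
  shows "f \<in> borel_measurable (restrict_space lborel A)"
proof -
  have "mono_on A (\<lambda>x. - f x)"
    using assms by (auto simp: monotone_on_def)
  then have "(\<lambda>x. - (- f x)) \<in> borel_measurable (restrict_space borel A)"
    by (intro borel_measurable_uminus borel_measurable_mono_on_fnc)
  then show ?thesis
    by (simp add: measurable_cong_sets[OF sets_restrict_space_cong[OF sets_lborel] refl])
qed

lemma int0_add_diff:
  fixes f g :: "real \<Rightarrow> real"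
  assumes f: "f \<in> borel_measurable (restrict_space lborel {0..})"
    and g: "g \<in> borel_measurable (restrict_space lborel {0..})"
    and le: "\<And>y. 0 \<le> y \<Longrightarrow> 0 \<le> f y \<and> f y \<le> g y"
  shows "int0 f + int0 (\<lambda>y. g y - f y) = int0 g"
proof -
  have "int0 f + int0 (\<lambda>y. g y - f y)
      = (\<integral>\<^sup>+y. ennreal (f y) + ennreal (g y - f y) \<partial>restrict_space lborel {0..})"
    unfolding int0_restrict_space using f g
    by (intro nn_integral_add[symmetric] measurable_compose[OF _ measurable_ennreal] borel_measurable_diff)
  also have "\<dots> = int0 g"
    unfolding int0_restrict_space using le
    by (intro nn_integral_cong) (auto simp: space_restrict_space ennreal_plus[symmetric])
  finally show ?thesis .
qed

lemma int0_cmult: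
  assumes "0 \<le> c" "f \<in> borel_measurable (restrict_space lborel {0..})"
  shows "int0 (\<lambda>y. c * f y) = ennreal c * int0 f"
proof -
  have "(\<lambda>y. ennreal (f y)) \<in> borel_measurable (restrict_space lborel {0..})"
    using assms(2) by (rule measurable_compose[OF _ measurable_ennreal])
  then show ?thesis
    unfolding int0_restrict_space using assms(1)
    by (subst nn_integral_cmult[symmetric]) (auto simp: ennreal_mult')
qed

lemma AE_of_int0_eq_0:
  assumes "f \<in> borel_measurable (restrict_space lborel {0..})" "int0 f = 0"
  shows "AE y in lborel. 0 \<le> y \<longrightarrow> f y \<le> 0"
proof -
  have "AE y in restrict_space lborel {0..}. ennreal (f y) = 0"
    using assms by (subst nn_integral_0_iff_AE[symmetric])
      (auto simp: int0_restrict_space intro: measurable_compose[OF _ measurable_ennreal])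
  then have "AE y in lborel. 0 \<le> y \<longrightarrow> ennreal (f y) = 0"
    by (subst (asm) AE_restrict_space_iff) auto
  then show ?thesis
    by eventually_elim (simp add: ennreal_eq_0_iff)
qed

lemma AE_right_continuous_in_closed:
  fixes P :: "real \<Rightarrow> 'a::topological_space"
  assumes AE: "AE z in lborel. a \<le> z \<longrightarrow> P z \<in> S" and "closed S"
    and cont: "continuous (at_right y) P" and "a \<le> y"
  shows "P y \<in> S"
proof (rule ccontr)
  assume "P y \<notin> S"
  then have "eventually (\<lambda>z. P z \<in> - S) (at_right y)"
    using cont \<open>closed S\<close> by (intro topological_tendstoD) (auto simp: continuous_within)
  then obtain b where "y < b" and b: "\<And>z. y < z \<Longrightarrow> z < b \<Longrightarrow> P z \<notin> S"
    unfolding eventually_at_right_field by auto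
  have "AE z in lborel. z \<notin> {y<..<b}"
    using AE by eventually_elim (use b \<open>a \<le> y\<close> in auto)
  then have "emeasure lborel {z \<in> space lborel. z \<in> {y<..<b}} = 0"
    by (rule emeasure_eq_0_AE)
  moreover have "{z \<in> space lborel. z \<in> {y<..<b}} = {y<..<b}"
    by auto
  ultimately have "emeasure lborel {y<..<b} = 0"
    by (simp only:)
  with \<open>y < b\<close> show False by simp
qed

lemma has_real_derivative_slope_gt:
  assumes "(f has_real_derivative D) (at x within S)" "c < D"
  shows "eventually (\<lambda>y. c < (f y - f x) / (y - x)) (at x within S)"
  using assms by (auto simp: has_field_derivative_iff intro: order_tendstoD)

lemma bdd_above_ratio_of_deriv:
  fixes w :: "real \<Rightarrow> real"
  assumes mono: "strict_mono_on {0..1} w" and w0: "w 0 = 0"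
    and deriv: "(w has_real_derivative D) (at 0 within {0..1})" and "0 < D"
  shows "bdd_above ((\<lambda>p. p / w p) ` {0<..1})"
proof -
  obtain d where "d > 0"
    and d: "\<And>p. p \<in> {0..1} \<Longrightarrow> p \<noteq> 0 \<Longrightarrow> dist p 0 < d \<Longrightarrow> D / 2 < (w p - w 0) / (p - 0)"
    using has_real_derivative_slope_gt[OF deriv, of "D / 2"] \<open>0 < D\<close> unfolding eventually_at by auto
  define e where "e = min (d / 2) 1"
  have e: "0 < e" "e < d" "e \<le> 1"
    using \<open>d > 0\<close> by (auto simp: e_def)
  have "w 0 < w e"
    using strict_mono_onD[OF mono] e by auto
  have "p / w p \<le> max (2 / D) (1 / w e)" if p: "p \<in> {0<..1}" for p
  proof (cases "p < e")
    case True
    have "0 < w p"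
      using strict_mono_onD[OF mono, of 0 p] p w0 by auto
    from True have "D / 2 < w p / p"
      using d[of p] p e w0 by auto
    then have "p / w p \<le> 2 / D"
      using p \<open>0 < D\<close> \<open>0 < w p\<close> by (simp add: field_simps)
    then show ?thesis by simp
  next
    case False
    then have "w e \<le> w p"
      using strict_mono_onD[OF mono, of e p] e p by (cases "e = p") auto
    then have "p / w p \<le> 1 / w e"
      using p \<open>w 0 < w e\<close> w0 by (intro frac_le) auto
    then show ?thesis by simp
  qed
  then show ?thesis
    by (intro bdd_aboveI2)
qed

lemma le_mu_star_mult:
  assumes "bdd_above ((\<lambda>p. p / w p) ` {0<..1})" "p \<in> {0<..1}" "0 < w p"
  shows "p \<le> mu_star w * w p"
proof -
  have "p / w p \<le> mu_star w"
    unfolding mu_star_def by (rule cSUP_upper[OF assms(2,1)])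
  then show ?thesis
    using assms(3) by (simp add: divide_le_eq)
qed

lemma mu_star_gt_one:
  assumes "bdd_above ((\<lambda>p. p / w p) ` {0<..1})" "q \<in> {0<..1}" "0 < w q" "w q < q"
  shows "1 < mu_star w"
proof -
  have "1 < q / w q"
    using assms(3,4) by simp
  also have "q / w q \<le> mu_star w"
    unfolding mu_star_def by (rule cSUP_upper[OF assms(2,1)])
  finally show ?thesis .
qed

lemma below_diagonal_near_one:
  fixes w :: "real \<Rightarrow> real"
  assumes "w 1 = 1" and deriv: "(w has_real_derivative D) (at 1 within {0..1})" and "1 < D"
  obtains q where "q \<in> {0<..<1}" "w q < q"
proof -
  obtain d where "d > 0"
    and d: "\<And>p. p \<in> {0..1} \<Longrightarrow> p \<noteq> 1 \<Longrightarrow> dist p 1 < d \<Longrightarrow> 1 < (w p - w 1) / (p - 1)"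
    using has_real_derivative_slope_gt[OF deriv \<open>1 < D\<close>] unfolding eventually_at by auto
  define q where "q = max (1 - d / 2) (1 / 2)"
  have q: "q \<in> {0<..<1}" "dist q 1 < d"
    using \<open>d > 0\<close> by (auto simp: q_def dist_real_def)
  then have "1 < (w q - 1) / (q - 1)"
    using d[of q] \<open>w 1 = 1\<close> by auto
  then have "w q < q"
    using q by (simp add: divide_simps split: if_splits)
  with q show thesis by (intro that)
qed

lemma mu_star_dominates:
  fixes w :: "real \<Rightarrow> real"
  assumes mono: "strict_mono_on {0..1} w" and w0: "w 0 = 0"
    and deriv: "(w has_real_derivative D) (at 0 within {0..1})" and "0 < D"
    and "p \<in> {0..1}"
  shows "p \<le> mu_star w * w p"
proof (cases "p = 0")
  case False
  then have "0 < w p"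
    using strict_mono_onD[OF mono, of 0 p] w0 \<open>p \<in> {0..1}\<close> by auto
  with False \<open>p \<in> {0..1}\<close> show ?thesis
    by (intro le_mu_star_mult bdd_above_ratio_of_deriv[OF mono w0 deriv \<open>0 < D\<close>]) auto
qed (simp add: w0)

lemma mu_star_gt_one_of_deriv:
  fixes w :: "real \<Rightarrow> real"
  assumes mono: "strict_mono_on {0..1} w" and w0: "w 0 = 0" and w1: "w 1 = 1"
    and deriv0: "(w has_real_derivative D0) (at 0 within {0..1})" and "0 < D0"
    and deriv1: "(w has_real_derivative D1) (at 1 within {0..1})" and "1 < D1"
  shows "1 < mu_star w"
proof -
  obtain q where q: "q \<in> {0<..<1}" "w q < q"
    using below_diagonal_near_one[OF w1 deriv1 \<open>1 < D1\<close>] by blast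
  then have "0 < w q"
    using strict_mono_onD[OF mono, of 0 q] w0 by auto
  with q show ?thesis
    by (intro mu_star_gt_one bdd_above_ratio_of_deriv[OF mono w0 deriv0 \<open>0 < D0\<close>]) auto
qed

lemma admissible_step:
  assumes "0 \<le> p" "p \<le> 1"
  shows "admissible (\<lambda>y. if y < c then p else 0)"
  unfolding admissible_def
proof (intro conjI allI impI)
  fix y :: real
  show "continuous (at_right y) (\<lambda>y. if y < c then p else 0)"
    unfolding continuous_within
  proof (rule tendsto_eventually)
    have "\<exists>b>y. \<forall>z. y < z \<longrightarrow> z < b \<longrightarrow> (z < c \<longleftrightarrow> y < c)"
      by (cases "y < c") (auto intro: exI[of _ c] exI[of _ "y + 1"])
    then show "eventually (\<lambda>z. (if z < c then p else 0) = (if y < c then p else 0)) (at_right y)"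
      unfolding eventually_at_right_field by auto
  qed
qed (use assms in auto)

lemma admissible_range: "admissible P \<Longrightarrow> 0 \<le> y \<Longrightarrow> P y \<in> {0..1}"
  by (simp add: admissible_def)

lemma admissible_antimono: "admissible P \<Longrightarrow> antimono_on {0..} P"
  by (auto simp: admissible_def monotone_on_def)

lemma admissible_right_continuous: "admissible P \<Longrightarrow> 0 \<le> y \<Longrightarrow> continuous (at_right y) P"
  by (simp add: admissible_def)

lemma admissible_two_valued_eq_step:
  assumes adm: "admissible P" and vals: "\<And>y. 0 \<le> y \<Longrightarrow> P y \<in> {0, p}"
    and "0 < p" "0 \<le> c" and int: "int0 P = ennreal (p * c)" and "0 \<le> y"
  shows "P y = (if y < c then p else 0)"
proof (rule ccontr)
  assume wrong: "P y \<noteq> (if y < c then p else 0)"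
  have le_p: "P z \<le> p" and ge_0: "0 \<le> P z" if "0 \<le> z" for z
    using vals[OF that] \<open>0 < p\<close> by auto
  show False
  proof (cases "y < c")
    case True
    with wrong vals[OF \<open>0 \<le> y\<close>] have "P y = 0"
      by auto
    then have "int0 P \<le> ennreal (p * y)"
      using admissible_antimono[OF adm] le_p \<open>0 \<le> y\<close> \<open>0 < p\<close> by (intro int0_le_of_vanishing) auto
    moreover have "ennreal (p * y) < ennreal (p * c)"
      using True \<open>0 < p\<close> \<open>0 \<le> y\<close> by (simp add: ennreal_less_iff)
    ultimately show False
      using int by simp
  next
    case False
    with wrong vals[OF \<open>0 \<le> y\<close>] have "P y = p"
      by auto
    then have "eventually (\<lambda>z. 0 < P z) (at_right y)"
      using admissible_right_continuous[OF adm \<open>0 \<le> y\<close>] \<open>0 < p\<close>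
      by (intro order_tendstoD(1)) (auto simp: continuous_within)
    then obtain b where "y < b" and b: "\<And>z. y < z \<Longrightarrow> z < b \<Longrightarrow> 0 < P z"
      unfolding eventually_at_right_field by auto
    define d where "d = (y + b) / 2"
    have d: "y < d" "d < b"
      using \<open>y < b\<close> by (auto simp: d_def)
    then have "P d = p"
      using b[of d] vals[of d] \<open>0 \<le> y\<close> by auto
    then have "ennreal (p * d) \<le> int0 P"
      using admissible_antimono[OF adm] ge_0 d \<open>0 \<le> y\<close> \<open>0 < p\<close> by (intro int0_ge_of_level) auto
    moreover have "ennreal (p * c) < ennreal (p * d)"
      using False d \<open>0 < p\<close> \<open>0 \<le> c\<close> by (simp add: ennreal_less_iff)
    ultimately show False
      using int by simp
  qed
qed

locale dominated_weight =
  fixes w :: "real \<Rightarrow> real" and M :: real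
  assumes mono: "mono_on {0..1} w"
    and nonneg: "p \<in> {0..1} \<Longrightarrow> 0 \<le> w p"
    and dominated: "p \<in> {0..1} \<Longrightarrow> p \<le> M * w p"
begin

lemma M_nonneg: "0 \<le> M"
proof (rule ccontr)
  assume "\<not> 0 \<le> M"
  then have "M * w 1 \<le> 0"
    using nonneg[of 1] by (simp add: mult_nonpos_nonneg)
  with dominated[of 1] show False by simp
qed

lemma admissible_comp_borel_measurable:
  assumes "admissible P"
  shows "(\<lambda>y. w (P y)) \<in> borel_measurable (restrict_space lborel {0..})"
proof (rule antimono_on_borel_measurable)
  show "antimono_on {0..} (\<lambda>y. w (P y))"
    using admissible_antimono[OF assms] admissible_range[OF assms] mono
    by (auto simp: monotone_on_def)
qed

lemma admissible_gap_measurable: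
  assumes "admissible P"
  shows "(\<lambda>y. M * w (P y) - P y) \<in> borel_measurable (restrict_space lborel {0..})"
  using antimono_on_borel_measurable[OF admissible_antimono[OF assms]]
    admissible_comp_borel_measurable[OF assms]
  by (intro borel_measurable_diff borel_measurable_times) auto

lemma admissible_gap_identity:
  assumes adm: "admissible P"
  shows "int0 P + int0 (\<lambda>y. M * w (P y) - P y) = ennreal M * int0 (\<lambda>y. w (P y))"
proof -
  have P_meas: "P \<in> borel_measurable (restrict_space lborel {0..})"
    using admissible_antimono[OF adm] by (rule antimono_on_borel_measurable)
  have wP_meas: "(\<lambda>y. w (P y)) \<in> borel_measurable (restrict_space lborel {0..})"
    using adm by (rule admissible_comp_borel_measurable)
  have "int0 P + int0 (\<lambda>y. M * w (P y) - P y) = int0 (\<lambda>y. M * w (P y))"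
    using P_meas wP_meas admissible_range[OF adm] dominated
    by (intro int0_add_diff borel_measurable_times) auto
  also have "\<dots> = ennreal M * int0 (\<lambda>y. w (P y))"
    using M_nonneg wP_meas by (rule int0_cmult)
  finally show ?thesis .
qed

lemma admissible_gap_bound:
  assumes adm: "admissible P" and "0 < lam"
    and budget: "ennreal lam * int0 (\<lambda>y. w (P y)) \<le> ennreal theta"
  shows "int0 P + int0 (\<lambda>y. M * w (P y) - P y) \<le> ennreal (M * theta / lam)"
proof -
  have "int0 P + int0 (\<lambda>y. M * w (P y) - P y)
      = ennreal (M / lam) * (ennreal lam * int0 (\<lambda>y. w (P y)))"
    using admissible_gap_identity[OF adm] M_nonneg \<open>0 < lam\<close>
    by (simp add: mult.assoc[symmetric] ennreal_mult[symmetric])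
  also have "\<dots> \<le> ennreal (M / lam) * ennreal theta"
    using budget by (rule mult_left_mono) simp
  also have "\<dots> = ennreal (M * theta / lam)"
    using M_nonneg \<open>0 < lam\<close> by (simp add: ennreal_mult'[symmetric])
  finally show ?thesis .
qed

lemma admissible_int0_le:
  assumes "admissible P" "0 < lam" "ennreal lam * int0 (\<lambda>y. w (P y)) \<le> ennreal theta"
  shows "int0 P \<le> ennreal (M * theta / lam)"
  using admissible_gap_bound[OF assms] by (rule order_trans[rotated]) simp

lemma optimal_AE_fixed_point:
  assumes adm: "admissible P" and "0 < lam"
    and budget: "ennreal lam * int0 (\<lambda>y. w (P y)) \<le> ennreal theta"
    and optimal: "int0 P = ennreal (M * theta / lam)"
  shows "AE y in lborel. 0 \<le> y \<longrightarrow> M * w (P y) = P y"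
proof -
  have "int0 P + int0 (\<lambda>y. M * w (P y) - P y) \<le> int0 P + 0"
    using admissible_gap_bound[OF adm \<open>0 < lam\<close> budget] optimal by simp
  then have "int0 (\<lambda>y. M * w (P y) - P y) = 0"
    using optimal by (simp add: ennreal_add_left_cancel_le)
  with admissible_gap_measurable[OF adm]
  have "AE y in lborel. 0 \<le> y \<longrightarrow> M * w (P y) - P y \<le> 0"
    by (rule AE_of_int0_eq_0)
  then show ?thesis
    by eventually_elim (use dominated admissible_range[OF adm] in force)
qed

lemma optimal_eq_step:
  assumes adm: "admissible P" and "0 < lam"
    and budget: "ennreal lam * int0 (\<lambda>y. w (P y)) \<le> ennreal theta"
    and optimal: "int0 P = ennreal (M * theta / lam)"
    and fixed_points: "\<And>p. p \<in> {0..1} \<Longrightarrow> M * w p = p \<Longrightarrow> p \<in> {0, q}"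
    and "0 < q" "0 \<le> c" "M * theta / lam = q * c" and "0 \<le> y"
  shows "P y = (if y < c then q else 0)"
proof -
  have "AE z in lborel. 0 \<le> z \<longrightarrow> P z \<in> {0, q}"
    using optimal_AE_fixed_point[OF adm \<open>0 < lam\<close> budget optimal]
    by eventually_elim (use fixed_points admissible_range[OF adm] in auto)
  then have "P z \<in> {0, q}" if "0 \<le> z" for z
    using admissible_right_continuous[OF adm that] that
    by (intro AE_right_continuous_in_closed) auto
  with adm show ?thesis
    using \<open>0 < q\<close> \<open>0 \<le> c\<close> optimal \<open>0 \<le> y\<close> unfolding \<open>M * theta / lam = q * c\<close>
    by (intro admissible_two_valued_eq_step) auto
qed

lemma step_budget:
  assumes "w 0 = 0" and fixed: "M * w q = q" and "0 < q" "q \<le> 1"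
    and "0 < lam" "0 \<le> c" and opt_value: "M * theta / lam = q * c"
  shows "ennreal lam * int0 (\<lambda>y. w (if y < c then q else 0)) = ennreal theta"
proof -
  have "(\<lambda>y. w (if y < c then q else 0)) = (\<lambda>y. if y < c then w q else 0)"
    by (auto simp: \<open>w 0 = 0\<close>)
  moreover have "0 \<le> w q"
    using nonneg \<open>0 < q\<close> \<open>q \<le> 1\<close> by simp
  ultimately have "int0 (\<lambda>y. w (if y < c then q else 0)) = ennreal (w q * c)"
    using int0_step[of "w q" c] \<open>0 \<le> c\<close> by simp
  moreover have "M * (lam * (w q * c)) = M * theta"
  proof -
    have "M * (lam * (w q * c)) = lam * c * (M * w q)"
      by (simp add: algebra_simps)
    also have "\<dots> = M * theta"
      using fixed opt_value \<open>0 < lam\<close> by (simp add: field_simps)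
    finally show ?thesis .
  qed
  then have "lam * (w q * c) = theta"
    using fixed \<open>0 < q\<close> by auto
  ultimately show ?thesis
    using \<open>0 \<le> w q\<close> \<open>0 \<le> c\<close> \<open>0 < lam\<close> by (simp add: ennreal_mult[symmetric])
qed

end

theorem proposition1:
  fixes w w1 w2 w3 :: "real \<Rightarrow> real" and theta lam pstar :: real
  assumes theta_pos: "theta > 0" and lambda_pos: "lam > 0"
    and w_range: "\<forall>p\<in>{0..1}. w p \<in> {0..1}"
    and w_mono: "strict_mono_on {0..1} w"
    and w0: "w 0 = 0" and w1_val: "w 1 = 1"
    and d1: "\<forall>x\<in>{0..1}. (w has_real_derivative w1 x) (at x within {0..1})"
    and d2: "\<forall>x\<in>{0..1}. (w1 has_real_derivative w2 x) (at x within {0..1})"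
    and d3: "\<forall>x\<in>{0..1}. (w2 has_real_derivative w3 x) (at x within {0..1})"
    and w1_0: "w1 0 > 1" and w1_1: "w1 1 > 1"
    and w3_pos: "\<forall>x\<in>{0..1}. w3 x > 0"
    and pstar: "0 < pstar" "pstar < 1" "mu_star w * w pstar = pstar"
    and pstar_unique: "\<forall>p\<in>{0<..<1}. mu_star w * w p = p \<longrightarrow> p = pstar"
  shows
    "(\<forall>P. admissible P \<and> ennreal lam * int0 (\<lambda>y. w (P y)) \<le> ennreal theta
          \<longrightarrow> int0 P \<le> ennreal (mu_star w * theta / lam))
     \<and> (let Pst = (\<lambda>y. if y < mu_star w * theta / (pstar * lam) then pstar else 0) in
          admissible Pst
          \<and> ennreal lam * int0 (\<lambda>y. w (Pst y)) \<le> ennreal theta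
          \<and> int0 Pst = ennreal (mu_star w * theta / lam)
          \<and> (\<forall>P. admissible P \<and> ennreal lam * int0 (\<lambda>y. w (P y)) \<le> ennreal theta
                 \<and> int0 P = ennreal (mu_star w * theta / lam)
                 \<longrightarrow> (\<forall>y\<ge>0. P y = Pst y)))"
proof -
  \<comment> \<open>The hypotheses on the second and third derivative serve in the paper only to make p* unique,
    which is assumed here directly.\<close>
  define M where "M = mu_star w"
  define c where "c = M * theta / (pstar * lam)"
  define Pst where "Pst = (\<lambda>y::real. if y < c then pstar else 0)"
  have "1 < M"
    unfolding M_def using d1 w1_0 w1_1
    by (intro mu_star_gt_one_of_deriv[OF w_mono w0 w1_val, of "w1 0" "w1 1"]) auto
  interpret dominated_weight w M
    using strict_mono_on_imp_mono_on[OF w_mono] w_range d1 w1_0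
    by unfold_locales (auto simp: M_def intro: mu_star_dominates[OF w_mono w0, of "w1 0"])
  \<comment> \<open>p = 1 is not a fixed point because mu* > 1; this is where w'(1) > 1 is needed.\<close>
  have fixed_points: "p \<in> {0, pstar}" if "p \<in> {0..1}" "M * w p = p" for p
    using that pstar_unique \<open>1 < M\<close> w1_val unfolding M_def by (cases "p = 1") auto
  have "0 \<le> c" and opt_value: "M * theta / lam = pstar * c"
    using \<open>1 < M\<close> pstar theta_pos lambda_pos by (auto simp: c_def)
  have Pst_budget: "ennreal lam * int0 (\<lambda>y. w (Pst y)) \<le> ennreal theta"
    using step_budget[OF w0 pstar(3)[folded M_def] pstar(1) _ lambda_pos \<open>0 \<le> c\<close> opt_value] pstar(2)
    by (simp add: Pst_def)
  have Pst_adm: "admissible Pst"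
    using pstar by (simp add: Pst_def admissible_step)
  have Pst_int: "int0 Pst = ennreal (M * theta / lam)"
    using pstar \<open>0 \<le> c\<close> by (simp add: Pst_def int0_step opt_value)
  have Pst_unique: "\<forall>y\<ge>0. P y = Pst y"
    if "admissible P" "ennreal lam * int0 (\<lambda>y. w (P y)) \<le> ennreal theta"
      "int0 P = ennreal (M * theta / lam)" for P
    using optimal_eq_step[OF that(1) lambda_pos that(2,3) fixed_points pstar(1) \<open>0 \<le> c\<close> opt_value]
    by (simp add: Pst_def)
  show ?thesis
    using admissible_int0_le[OF _ lambda_pos] Pst_adm Pst_budget Pst_int Pst_unique
    unfolding Let_def M_def[symmetric] c_def[symmetric] Pst_def[symmetric] by blast
qed

end
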